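(* Let $M$ be a sparse paving matroid of rank $r$, and let $B_1$ and $B_2$ be disjoint bases of $M$. Then there is a cyclic ordering $(b_1,b_2,\dots,b_r,b_{r+1},\dots,b_{2r})$ of $B_1\cup B_2$ with $B_1=\{b_1,\dots,b_r\}$ and $B_2=\{b_{r+1},\dots,b_{2r}\}$ such that every set of $r$ cyclically-consecutive elements of this cyclic ordering is a basis of $M$.
   Context: A matroid $M$ of rank $r$ is sparse paving if every nonspanning circuit is a hyperplane; equivalently, every $r$-subset of $E(M)$ is a basis or a circuit-hyperplane. *)

theory Defs
  imports Main
begin

definition matroid :: "'a set \<Rightarrow> ('a set \<Rightarrow> bool) \<Rightarrow> bool" where
  "matroid E indep \<longleftrightarrow>
     finite E \<and>
     indep {} \<and>
     (\<forall>X. indep X \<longrightarrow> X \<subseteq> E) \<and>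
     (\<forall>X Y. indep X \<and> Y \<subseteq> X \<longrightarrow> indep Y) \<and>
     (\<forall>X Y. indep X \<and> indep Y \<and> card X < card Y \<longrightarrow>
        (\<exists>y \<in> Y - X. indep (insert y X)))"

definition basis :: "'a set \<Rightarrow> ('a set \<Rightarrow> bool) \<Rightarrow> 'a set \<Rightarrow> bool" where
  "basis E indep B \<longleftrightarrow> indep B \<and> (\<forall>X. indep X \<and> B \<subseteq> X \<longrightarrow> X = B)"

definition rk :: "'a set \<Rightarrow> ('a set \<Rightarrow> bool) \<Rightarrow> 'a set \<Rightarrow> nat" where
  "rk E indep X = Max {card Y | Y. Y \<subseteq> X \<and> indep Y}"

definition matroid_rank :: "'a set \<Rightarrow> ('a set \<Rightarrow> bool) \<Rightarrow> nat" where
  "matroid_rank E indep = rk E indep E"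

definition circuit :: "'a set \<Rightarrow> ('a set \<Rightarrow> bool) \<Rightarrow> 'a set \<Rightarrow> bool" where
  "circuit E indep C \<longleftrightarrow> C \<subseteq> E \<and> \<not> indep C \<and> (\<forall>x \<in> C. indep (C - {x}))"

definition spanning :: "'a set \<Rightarrow> ('a set \<Rightarrow> bool) \<Rightarrow> 'a set \<Rightarrow> bool" where
  "spanning E indep X \<longleftrightarrow> X \<subseteq> E \<and> rk E indep X = rk E indep E"

definition flat :: "'a set \<Rightarrow> ('a set \<Rightarrow> bool) \<Rightarrow> 'a set \<Rightarrow> bool" where
  "flat E indep F \<longleftrightarrow> F \<subseteq> E \<and> (\<forall>x \<in> E - F. rk E indep (insert x F) > rk E indep F)"

definition hyperplane :: "'a set \<Rightarrow> ('a set \<Rightarrow> bool) \<Rightarrow> 'a set \<Rightarrow> bool" where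
  "hyperplane E indep H \<longleftrightarrow> flat E indep H \<and> rk E indep H + 1 = rk E indep E"

definition sparse_paving :: "'a set \<Rightarrow> ('a set \<Rightarrow> bool) \<Rightarrow> bool" where
  "sparse_paving E indep \<longleftrightarrow> matroid E indep \<and>
     (\<forall>C. circuit E indep C \<and> \<not> spanning E indep C \<longrightarrow> hyperplane E indep C)"

end

theory Submission
  imports Defs
begin

text \<open>
  In a sparse paving matroid of rank r, two r-sets that differ by a single exchange (adjacent
  sets) cannot both be non-bases. Order B1 as a_0, ..., a_(r-1) and B2 as c_0, ..., c_(r-1):
  the window starting at a_k is (B1 - {a_0, ..., a_(k-1)}) \<union> {c_0, ..., c_(k-1)} and the
  window starting at c_k is its complement, so we need these sets and their complements to be
  bases for all k. The orderings are built from the back: from P \<subseteq> B1 and Q \<subseteq> B2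
  of size n we remove a pair (x, y) keeping the set for P - {x}, Q - {y} and its complement
  bases. For fixed x the candidate sets for different y are pairwise adjacent, so at most two
  choices of y fail; thus at most 2n of the n^2 pairs fail, and for n \<ge> 3 there is enough
  room to also secure a good final pair for the step from size 2 to size 1.
\<close>

section \<open>Adjacent sets\<close>

definition adjacent :: "'a set \<Rightarrow> 'a set \<Rightarrow> bool" where
  "adjacent S T \<longleftrightarrow> (\<exists>s t. S - T = {s} \<and> T - S = {t})"

lemma adjacent_sym: "adjacent S T \<longleftrightarrow> adjacent T S"
  unfolding adjacent_def by blast

lemma adjacent_singletons: "x \<noteq> y \<Longrightarrow> adjacent {x} {y}"
  unfolding adjacent_def by blast

lemma adjacent_Diff_singletons: "x \<in> X \<Longrightarrow> y \<in> X \<Longrightarrow> x \<noteq> y \<Longrightarrow> adjacent (X - {x}) (X - {y})"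
  unfolding adjacent_def by (intro exI[of _ y] exI[of _ x]) blast

lemma adjacent_Diff_Diff:
  assumes "S \<subseteq> U" "T \<subseteq> U"
  shows "adjacent (U - S) (U - T) \<longleftrightarrow> adjacent S T"
proof -
  have "(U - S) - (U - T) = T - S" "(U - T) - (U - S) = S - T"
    using assms by auto
  then show ?thesis unfolding adjacent_def by auto
qed

lemma adjacent_obtain_exchange:
  assumes "adjacent S T"
  obtains s t where "s \<in> S" "t \<notin> S" "T = insert t (S - {s})"
proof -
  obtain s t where "S - T = {s}" "T - S = {t}"
    using assms unfolding adjacent_def by blast
  then have "s \<in> S" "t \<notin> S" "T = insert t (S - {s})" by blast+
  then show ?thesis by (rule that)
qed

section \<open>Rank, bases and circuits\<close>

lemma finite_rk_candidates: "finite X \<Longrightarrow> finite {card Y | Y. Y \<subseteq> X \<and> indep Y}"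
  by (rule finite_subset[of _ "card ` Pow X"]) auto

lemma card_le_rk: "finite X \<Longrightarrow> Y \<subseteq> X \<Longrightarrow> indep Y \<Longrightarrow> card Y \<le> rk E indep X"
  unfolding rk_def by (rule Max_ge[OF finite_rk_candidates]) auto

lemma rk_attained:
  assumes "finite X" "indep {}"
  obtains Y where "Y \<subseteq> X" "indep Y" "card Y = rk E indep X"
proof -
  have "rk E indep X \<in> {card Y | Y. Y \<subseteq> X \<and> indep Y}"
    unfolding rk_def by (rule Max_in[OF finite_rk_candidates[OF assms(1)]]) (use assms(2) in auto)
  then show ?thesis using that by auto
qed

context
  fixes E :: "'a set" and indep :: "'a set \<Rightarrow> bool"
  assumes matroid: "matroid E indep"
begin

lemma finite_ground: "finite E"
  using matroid unfolding matroid_def by blast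

lemma indep_empty: "indep {}"
  using matroid unfolding matroid_def by blast

lemma indep_subset_ground: "indep X \<Longrightarrow> X \<subseteq> E"
  using matroid unfolding matroid_def by blast

lemma indep_finite: "indep X \<Longrightarrow> finite X"
  using indep_subset_ground finite_ground finite_subset by blast

lemma indep_augment: "indep X \<Longrightarrow> indep Y \<Longrightarrow> card X < card Y \<Longrightarrow> \<exists>y \<in> Y - X. indep (insert y X)"
  using matroid unfolding matroid_def by blast

lemma indep_card_le_rank: "indep X \<Longrightarrow> card X \<le> matroid_rank E indep"
  unfolding matroid_rank_def
  using card_le_rk[where X=E and E=E] finite_ground indep_subset_ground by blast

lemma basis_iff_indep_card: "basis E indep B \<longleftrightarrow> indep B \<and> card B = matroid_rank E indep"
proof
  assume B: "basis E indep B"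
  then have "indep B" unfolding basis_def by blast
  obtain J where J: "indep J" "card J = matroid_rank E indep"
    using rk_attained[where X=E and E=E and indep=indep] finite_ground indep_empty
    unfolding matroid_rank_def by blast
  have "\<not> card B < card J"
  proof
    assume "card B < card J"
    then obtain y where "y \<in> J - B" "indep (insert y B)"
      using indep_augment \<open>indep B\<close> J(1) by blast
    then show False using B unfolding basis_def by blast
  qed
  then show "indep B \<and> card B = matroid_rank E indep"
    using \<open>indep B\<close> J(2) indep_card_le_rank by force
next
  assume B: "indep B \<and> card B = matroid_rank E indep"
  show "basis E indep B"
    unfolding basis_def
  proof (intro conjI allI impI)
    fix X assume X: "indep X \<and> B \<subseteq> X"
    then have "card X \<le> card B"
      using indep_card_le_rank B by simp
    then show "X = B"
      using card_seteq[OF indep_finite] X by (metis)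
  qed (use B in blast)
qed

lemma rk_less_card_if_dependent:
  assumes "finite X" "\<not> indep X"
  shows "rk E indep X < card X"
proof -
  obtain Y where Y: "Y \<subseteq> X" "indep Y" "card Y = rk E indep X"
    using rk_attained[where E=E and indep=indep and X=X] assms(1) indep_empty by blast
  then have "Y \<subset> X" using assms(2) by blast
  then show ?thesis using Y(3) psubset_card_mono[OF assms(1)] by metis
qed

lemma dependent_contains_circuit:
  assumes "X \<subseteq> E" "\<not> indep X"
  obtains C where "C \<subseteq> X" "circuit E indep C"
proof -
  have "\<exists>C. (C \<subseteq> X \<and> \<not> indep C) \<and> (\<forall>C'. C' \<subseteq> X \<and> \<not> indep C' \<longrightarrow> card C \<le> card C')"
    by (rule ex_has_least_nat) (use assms(2) in blast)
  then obtain C where C: "C \<subseteq> X" "\<not> indep C"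
    and minimal: "\<And>C'. C' \<subseteq> X \<Longrightarrow> \<not> indep C' \<Longrightarrow> card C \<le> card C'"
    by blast
  have "finite C"
    using finite_subset[OF subset_trans[OF C(1) assms(1)] finite_ground] .
  have "indep (C - {x})" if "x \<in> C" for x
  proof (rule ccontr)
    assume "\<not> indep (C - {x})"
    then have "card C \<le> card (C - {x})"
      using minimal C(1) by blast
    then show False
      using card_Diff1_less[OF \<open>finite C\<close> that] by simp
  qed
  then have "circuit E indep C"
    unfolding circuit_def using C assms(1) by blast
  then show ?thesis using C(1) that by blast
qed

end

section \<open>Sparse paving matroids\<close>

context
  fixes E :: "'a set" and indep :: "'a set \<Rightarrow> bool"
  assumes sparse_paving: "sparse_paving E indep"
begin

lemma sparse_paving_matroid: "matroid E indep"
  using sparse_paving unfolding sparse_paving_def by blast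

lemma circuit_hyperplane_if_rk_less:
  "circuit E indep C \<Longrightarrow> rk E indep C < matroid_rank E indep \<Longrightarrow> hyperplane E indep C"
proof -
  assume "circuit E indep C" "rk E indep C < matroid_rank E indep"
  moreover from this have "\<not> spanning E indep C"
    unfolding spanning_def matroid_rank_def by simp
  ultimately show "hyperplane E indep C"
    using sparse_paving unfolding sparse_paving_def by blast
qed

lemma indep_if_card_less_rank:
  assumes X: "X \<subseteq> E" "card X < matroid_rank E indep"
  shows "indep X"
proof (rule ccontr)
  assume "\<not> indep X"
  then obtain C where C: "C \<subseteq> X" "circuit E indep C"
    using dependent_contains_circuit[OF sparse_paving_matroid X(1)] by blast
  have "finite X"
    using X(1) finite_ground[OF sparse_paving_matroid] finite_subset by blast
  then have "card C \<le> card X"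
    using C(1) card_mono by blast
  moreover have "rk E indep C < card C"
    using C rk_less_card_if_dependent[OF sparse_paving_matroid] \<open>finite X\<close> finite_subset
    unfolding circuit_def by blast
  moreover have "rk E indep C + 1 = matroid_rank E indep"
    using circuit_hyperplane_if_rk_less[OF C(2)] calculation X(2)
    unfolding hyperplane_def matroid_rank_def by simp
  ultimately show False using X(2) by linarith
qed

lemma indep_exchange_if_dependent:
  assumes X: "X \<subseteq> E" "card X = matroid_rank E indep" "\<not> indep X"
    and x: "x \<in> X" and y: "y \<in> E - X"
  shows "indep (insert y (X - {x}))"
proof -
  have M: "matroid E indep" by (rule sparse_paving_matroid)
  have "finite X"
    using X(1) finite_ground[OF M] finite_subset by blast
  have indep_remove: "indep (X - {e})" if "e \<in> X" for e
    using indep_if_card_less_rank[of "X - {e}"] card_Diff1_less[OF \<open>finite X\<close> that] X(1,2) by auto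
  then have "circuit E indep X"
    unfolding circuit_def using X(1,3) by blast
  moreover have "rk E indep X < matroid_rank E indep"
    using rk_less_card_if_dependent[OF M \<open>finite X\<close> X(3)] X(2) by simp
  ultimately have "hyperplane E indep X"
    by (rule circuit_hyperplane_if_rk_less)
  then have "rk E indep X < rk E indep (insert y X)"
    using y unfolding hyperplane_def flat_def by blast
  moreover have "card (X - {x}) \<le> rk E indep X"
    using card_le_rk[where X=X and Y="X - {x}" and indep=indep and E=E] \<open>finite X\<close> indep_remove[OF x]
    by blast
  ultimately have "card (X - {x}) < rk E indep (insert y X)"
    by linarith
  moreover obtain J where J: "J \<subseteq> insert y X" "indep J" "card J = rk E indep (insert y X)"
    using rk_attained[where X="insert y X" and indep=indep and E=E] \<open>finite X\<close> indep_empty[OF M]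
    by blast
  ultimately obtain e where e: "e \<in> J - (X - {x})" "indep (insert e (X - {x}))"
    using indep_augment[OF M indep_remove[OF x] J(2)] by auto
  have "insert x (X - {x}) = X" using x by blast
  then have "e \<noteq> x" using e(2) X(3) by auto
  then have "e = y" using e(1) J(1) by blast
  then show ?thesis using e(2) by simp
qed

lemma sparse_paving_adjacent_basis:
  assumes "X \<subseteq> E" "Y \<subseteq> E" "card X = matroid_rank E indep" "adjacent X Y"
  shows "basis E indep X \<or> basis E indep Y"
proof -
  obtain x y where xy: "x \<in> X" "y \<notin> X" "Y = insert y (X - {x})"
    using adjacent_obtain_exchange[OF assms(4)] .
  have "finite X"
    using assms(1) finite_ground[OF sparse_paving_matroid] finite_subset by blast
  then have "card Y = card X"
    using xy card_Diff1_less[OF _ xy(1)] by (simp add: card_insert_if)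
  moreover have "y \<in> E - X"
    using xy assms(2) by blast
  then have "indep X \<or> indep Y"
    using indep_exchange_if_dependent[OF assms(1,3) _ xy(1)] xy(3) by blast
  ultimately show ?thesis
    using basis_iff_indep_card[OF sparse_paving_matroid] assms(3) by auto
qed

end

section \<open>Windows of a rotated list\<close>

lemma set_drop_eq_Diff_set_take: "distinct xs \<Longrightarrow> set (drop k xs) = set xs - set (take k xs)"
proof -
  assume "distinct xs"
  have "set xs = set (take k xs) \<union> set (drop k xs)"
    by (metis append_take_drop_id set_append)
  moreover have "set (take k xs) \<inter> set (drop k xs) = {}"
    using set_take_disj_set_drop_if_distinct[OF \<open>distinct xs\<close> order_refl] .
  ultimately show ?thesis by auto
qed

lemma set_take_rotate_append:
  assumes "length xs = n" "length ys = n" "k \<le> n"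
  shows "set (take n (rotate k (xs @ ys))) = set (drop k xs) \<union> set (take k ys)"
proof -
  have "k mod length (xs @ ys) = k"
    using assms by (cases "n = 0") auto
  then have "rotate k (xs @ ys) = drop k xs @ ys @ take k xs"
    using assms by (simp add: rotate_drop_take)
  moreover have "take n (drop k xs @ ys @ take k xs) = drop k xs @ take k ys"
    using assms by simp
  ultimately show ?thesis by simp
qed

lemma set_take_rotate_conv_nth:
  assumes "m \<le> length xs"
  shows "set (take m (rotate i xs)) = {xs ! ((i + j) mod length xs) | j. j < m}"
proof -
  have "set (take m (rotate i xs)) = (!) (rotate i xs) ` {0..<m}"
    using assms by (simp add: nth_image)
  also have "\<dots> = {xs ! ((i + j) mod length xs) | j. j < m}"
    using assms by (auto simp: nth_rotate)
  finally show ?thesis .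
qed

lemma nth_image_atLeastLessThan_length: "(!) xs ` {k..<length xs} = set (drop k xs)"
proof
  show "(!) xs ` {k..<length xs} \<subseteq> set (drop k xs)"
  proof
    fix z assume "z \<in> (!) xs ` {k..<length xs}"
    then obtain i where "k \<le> i" "i < length xs" "z = xs ! i" by auto
    then have "z = drop k xs ! (i - k)" "i - k < length (drop k xs)" by auto
    then show "z \<in> set (drop k xs)" by (metis nth_mem)
  qed
  show "set (drop k xs) \<subseteq> (!) xs ` {k..<length xs}"
  proof
    fix z assume "z \<in> set (drop k xs)"
    then obtain i where "i < length (drop k xs)" "z = drop k xs ! i" by (metis in_set_conv_nth)
    then have "k + i \<in> {k..<length xs}" "z = xs ! (k + i)" by auto
    then show "z \<in> (!) xs ` {k..<length xs}" by blast
  qed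
qed

section \<open>Cyclic orderings of two disjoint blocks\<close>

lemma card_le_1_if_all_eq:
  assumes "\<And>a b. a \<in> A \<Longrightarrow> b \<in> A \<Longrightarrow> a = b"
  shows "card A \<le> 1"
proof (cases "A = {}")
  case False
  then obtain a where "a \<in> A" by blast
  then have "A = {a}" using assms by blast
  then show ?thesis by simp
qed simp

lemma exists_not_in_if_card_less:
  assumes "finite A" "finite B" "card B < card A"
  obtains a where "a \<in> A" "a \<notin> B"
proof -
  have "\<not> A \<subseteq> B"
    using card_mono[OF assms(2)] assms(3) by (meson not_le)
  then show ?thesis using that by blast
qed

text \<open>
  The construction only needs that B1 and B2 are good and that no two adjacent r-subsets of
  B1 \<union> B2 are both bad; for a sparse paving matroid, good means being a basis.
\<close>

locale sparse_exchange =
  fixes B1 B2 :: "'a set" and r :: nat and good :: "'a set \<Rightarrow> bool"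
  assumes finite_B1: "finite B1" and finite_B2: "finite B2"
    and card_B1: "card B1 = r" and card_B2: "card B2 = r"
    and disjoint: "B1 \<inter> B2 = {}"
    and good_B1: "good B1" and good_B2: "good B2"
    and good_adjacent:
      "\<And>S T. S \<subseteq> B1 \<union> B2 \<Longrightarrow> T \<subseteq> B1 \<union> B2 \<Longrightarrow> card S = r \<Longrightarrow> adjacent S T \<Longrightarrow> good S \<or> good T"
begin

definition exchanged :: "'a set \<Rightarrow> 'a set \<Rightarrow> 'a set" where
  "exchanged P Q = B1 - P \<union> Q"

definition good_split :: "'a set \<Rightarrow> bool" where
  "good_split S \<longleftrightarrow> good S \<and> good (B1 \<union> B2 - S)"

text \<open>
  At size two the bound of 2n bad pairs leaves no guaranteed good pair among the n^2 = 4, so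
  the choice made at size three must already secure a good last pair.
\<close>

definition endgame_ok :: "'a set \<Rightarrow> 'a set \<Rightarrow> bool" where
  "endgame_ok P Q \<longleftrightarrow> (card P = 2 \<longrightarrow> (\<exists>p \<in> P. \<exists>q \<in> Q. good_split (exchanged {p} {q})))"

lemma card_blocks: "card (B1 \<union> B2) = 2 * r"
  using card_Un_disjoint[OF finite_B1 finite_B2 disjoint] card_B1 card_B2 by simp

lemma exchanged_subset: "Q \<subseteq> B2 \<Longrightarrow> exchanged P Q \<subseteq> B1 \<union> B2"
  unfolding exchanged_def by blast

lemma card_exchanged:
  assumes "P \<subseteq> B1" "Q \<subseteq> B2" "card P = card Q"
  shows "card (exchanged P Q) = r"
proof -
  have "finite P" "finite Q"
    using assms(1,2) finite_B1 finite_B2 finite_subset by blast+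
  have "card (exchanged P Q) = card (B1 - P) + card Q"
    unfolding exchanged_def using disjoint assms(2) \<open>finite Q\<close> finite_B1
    by (intro card_Un_disjoint) auto
  also have "\<dots> = r"
    using card_Diff_subset[OF \<open>finite P\<close> assms(1)] card_mono[OF finite_B1 assms(1)] card_B1 assms(3)
    by simp
  finally show ?thesis .
qed

lemma complement_exchanged:
  "P \<subseteq> B1 \<Longrightarrow> Q \<subseteq> B2 \<Longrightarrow> B1 \<union> B2 - exchanged P Q = exchanged (B1 - P) (B2 - Q)"
  unfolding exchanged_def using disjoint by auto

lemma exchanged_adjacent_right:
  assumes "Q \<subseteq> B2" "Q' \<subseteq> B2" "adjacent Q Q'"
  shows "adjacent (exchanged P Q) (exchanged P Q')"
proof -
  have "exchanged P Q - exchanged P Q' = Q - Q'" "exchanged P Q' - exchanged P Q = Q' - Q"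
    unfolding exchanged_def using assms(1,2) disjoint by auto
  then show ?thesis using assms(3) by (simp only: adjacent_def)
qed

lemma exchanged_adjacent_left:
  assumes "P \<subseteq> B1" "P' \<subseteq> B1" "Q \<subseteq> B2" "adjacent P P'"
  shows "adjacent (exchanged P Q) (exchanged P' Q)"
proof -
  have "exchanged P Q - exchanged P' Q = P' - P" "exchanged P' Q - exchanged P Q = P - P'"
    unfolding exchanged_def using assms(1-3) disjoint by auto
  moreover have "adjacent P' P" using assms(4) adjacent_sym by blast
  ultimately show ?thesis by (simp only: adjacent_def)
qed

lemma good_split_adjacent:
  assumes "S \<subseteq> B1 \<union> B2" "T \<subseteq> B1 \<union> B2" "card S = r" "adjacent S T"
  shows "(good S \<or> good T) \<and> (good (B1 \<union> B2 - S) \<or> good (B1 \<union> B2 - T))"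
proof
  show "good S \<or> good T" using good_adjacent[OF assms] .
  have "card (B1 \<union> B2 - S) = r"
    using card_Diff_subset[OF finite_subset[OF assms(1)] assms(1)] finite_B1 finite_B2 card_blocks assms(3)
    by simp
  moreover have "adjacent (B1 \<union> B2 - S) (B1 \<union> B2 - T)"
    using adjacent_Diff_Diff[OF assms(1,2)] assms(4) by blast
  ultimately show "good (B1 \<union> B2 - S) \<or> good (B1 \<union> B2 - T)"
    by (intro good_adjacent) auto
qed

lemma card_not_good_split_le_2:
  assumes subset: "\<And>y. y \<in> Y \<Longrightarrow> T y \<subseteq> B1 \<union> B2"
    and card: "\<And>y. y \<in> Y \<Longrightarrow> card (T y) = r"
    and adjacent: "\<And>y y'. y \<in> Y \<Longrightarrow> y' \<in> Y \<Longrightarrow> y \<noteq> y' \<Longrightarrow> adjacent (T y) (T y')"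
  shows "card {y \<in> Y. \<not> good_split (T y)} \<le> 2"
proof -
  have split_adjacent: "(good (T y) \<or> good (T y')) \<and>
      (good (B1 \<union> B2 - T y) \<or> good (B1 \<union> B2 - T y'))"
    if "y \<in> Y" "y' \<in> Y" "y \<noteq> y'" for y y'
    using good_split_adjacent[OF subset subset card adjacent] that by blast
  let ?bad1 = "{y \<in> Y. \<not> good (T y)}" and ?bad2 = "{y \<in> Y. \<not> good (B1 \<union> B2 - T y)}"
  have "{y \<in> Y. \<not> good_split (T y)} = ?bad1 \<union> ?bad2"
    unfolding good_split_def by blast
  then have "card {y \<in> Y. \<not> good_split (T y)} \<le> card ?bad1 + card ?bad2"
    by (simp only: card_Un_le)
  moreover have "card ?bad1 \<le> 1"
    by (rule card_le_1_if_all_eq) (use split_adjacent in blast)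
  moreover have "card ?bad2 \<le> 1"
    by (rule card_le_1_if_all_eq) (use split_adjacent in blast)
  ultimately show ?thesis by linarith
qed

lemma card_bad_exchanges_le:
  assumes P: "P \<subseteq> B1" and Q: "Q \<subseteq> B2" and card_PQ: "card P = card Q"
  shows "card {(x, y) \<in> P \<times> Q. \<not> good_split (exchanged (P - {x}) (Q - {y}))} \<le> 2 * card P"
proof -
  have "finite P" "finite Q"
    using P Q finite_B1 finite_B2 finite_subset by blast+
  let ?bad = "\<lambda>x. {y \<in> Q. \<not> good_split (exchanged (P - {x}) (Q - {y}))}"
  have row: "card (?bad x) \<le> 2" if x: "x \<in> P" for x
  proof (rule card_not_good_split_le_2[where Y = Q and T = "\<lambda>y. exchanged (P - {x}) (Q - {y})"])
    fix y assume y: "y \<in> Q"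
    show "exchanged (P - {x}) (Q - {y}) \<subseteq> B1 \<union> B2"
      using Q by (intro exchanged_subset) blast
    have "card (P - {x}) = card (Q - {y})"
      using x y card_PQ \<open>finite P\<close> \<open>finite Q\<close> by simp
    then show "card (exchanged (P - {x}) (Q - {y})) = r"
      using P Q by (intro card_exchanged) auto
  next
    fix y y' assume "y \<in> Q" "y' \<in> Q" "y \<noteq> y'"
    then show "adjacent (exchanged (P - {x}) (Q - {y})) (exchanged (P - {x}) (Q - {y'}))"
      using Q by (intro exchanged_adjacent_right adjacent_Diff_singletons) auto
  qed
  have "{(x, y) \<in> P \<times> Q. \<not> good_split (exchanged (P - {x}) (Q - {y}))} = Sigma P ?bad"
    by auto
  moreover have "card (Sigma P ?bad) = (\<Sum>x\<in>P. card (?bad x))"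
    using \<open>finite P\<close> \<open>finite Q\<close> by (intro card_SigmaI) auto
  moreover have "(\<Sum>x\<in>P. card (?bad x)) \<le> (\<Sum>x\<in>P. 2)"
    using row by (rule sum_mono)
  ultimately show ?thesis by simp
qed

lemma exists_good_split_row:
  assumes p: "p \<in> B1" and Q: "Q \<subseteq> B2" and "3 \<le> card Q"
  shows "\<exists>q \<in> Q. good_split (exchanged {p} {q})"
proof (rule ccontr)
  assume "\<not> ?thesis"
  then have "{q \<in> Q. \<not> good_split (exchanged {p} {q})} = Q" by blast
  moreover have "card {q \<in> Q. \<not> good_split (exchanged {p} {q})} \<le> 2"
  proof (rule card_not_good_split_le_2[where Y = Q and T = "\<lambda>q. exchanged {p} {q}"])
    fix q assume "q \<in> Q"
    then show "exchanged {p} {q} \<subseteq> B1 \<union> B2" "card (exchanged {p} {q}) = r"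
      using p Q exchanged_subset[of "{q}"] card_exchanged[of "{p}" "{q}"] by auto
  next
    fix q q' assume "q \<in> Q" "q' \<in> Q" "q \<noteq> q'"
    then show "adjacent (exchanged {p} {q}) (exchanged {p} {q'})"
      using Q by (intro exchanged_adjacent_right adjacent_singletons) auto
  qed
  ultimately show False using assms(3) by simp
qed

lemma exists_good_split_column:
  assumes q: "q \<in> B2" and P: "P \<subseteq> B1" and "3 \<le> card P"
  shows "\<exists>p \<in> P. good_split (exchanged {p} {q})"
proof (rule ccontr)
  assume "\<not> ?thesis"
  then have "{p \<in> P. \<not> good_split (exchanged {p} {q})} = P" by blast
  moreover have "card {p \<in> P. \<not> good_split (exchanged {p} {q})} \<le> 2"
  proof (rule card_not_good_split_le_2[where Y = P and T = "\<lambda>p. exchanged {p} {q}"])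
    fix p assume "p \<in> P"
    then show "exchanged {p} {q} \<subseteq> B1 \<union> B2" "card (exchanged {p} {q}) = r"
      using q P exchanged_subset[of "{q}"] card_exchanged[of "{p}" "{q}"] by auto
  next
    fix p p' assume "p \<in> P" "p' \<in> P" "p \<noteq> p'"
    then show "adjacent (exchanged {p} {q}) (exchanged {p'} {q})"
      using P q by (intro exchanged_adjacent_left adjacent_singletons) auto
  qed
  ultimately show False using assms(3) by simp
qed

lemma card_endgame_failures_le_1:
  assumes P: "P \<subseteq> B1" and Q: "Q \<subseteq> B2" and "3 \<le> card P" "3 \<le> card Q"
  shows "card {(x, y) \<in> P \<times> Q. \<not> endgame_ok (P - {x}) (Q - {y})} \<le> 1"
proof (rule card_le_1_if_all_eq)
  have "finite P" "finite Q"
    using P Q finite_B1 finite_B2 finite_subset by blast+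
  fix d d' assume d: "d \<in> {(x, y) \<in> P \<times> Q. \<not> endgame_ok (P - {x}) (Q - {y})}"
    and d': "d' \<in> {(x, y) \<in> P \<times> Q. \<not> endgame_ok (P - {x}) (Q - {y})}"
  obtain x y x' y' where xy: "d = (x, y)" and xy': "d' = (x', y')"
    by (cases d, cases d') blast
  have bad: "\<not> good_split (exchanged {p} {q})"
    if "(p \<in> P - {x} \<and> q \<in> Q - {y}) \<or> (p \<in> P - {x'} \<and> q \<in> Q - {y'})" for p q
    using d d' that unfolding xy xy' endgame_ok_def by blast
  show "d = d'"
  proof (rule ccontr)
    assume "d \<noteq> d'"
    show False
    proof (cases "y = y'")
      case True
      with \<open>d \<noteq> d'\<close> have "x \<noteq> x'" unfolding xy xy' by simp
      obtain q where "q \<in> Q" "q \<notin> {y}"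
        using exists_not_in_if_card_less[of Q "{y}"] \<open>finite Q\<close> assms(4) by auto
      then have "\<not> good_split (exchanged {p} {q})" if "p \<in> P" for p
        using bad[of p q] that True \<open>x \<noteq> x'\<close> by auto
      then show False
        using exists_good_split_column[OF _ P assms(3)] \<open>q \<in> Q\<close> Q by blast
    next
      case False
      have "card {x, x'} < card P"
        using assms(3) by (cases "x = x'") auto
      then obtain p where "p \<in> P" "p \<notin> {x, x'}"
        using exists_not_in_if_card_less[of P "{x, x'}"] \<open>finite P\<close> by auto
      then have "\<not> good_split (exchanged {p} {q})" if "q \<in> Q" for q
        using bad[of p q] that False by auto
      then show False
        using exists_good_split_row[OF _ Q assms(4)] \<open>p \<in> P\<close> P by blast
    qed
  qed
qed

lemma exists_exchange_step_counting:
  assumes P: "P \<subseteq> B1" and Q: "Q \<subseteq> B2" and card: "card P = n" "card Q = n" and "3 \<le> n"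
  shows "\<exists>x \<in> P. \<exists>y \<in> Q. good_split (exchanged (P - {x}) (Q - {y})) \<and> endgame_ok (P - {x}) (Q - {y})"
proof -
  let ?bad = "{(x, y) \<in> P \<times> Q. \<not> good_split (exchanged (P - {x}) (Q - {y}))}"
  let ?fail = "{(x, y) \<in> P \<times> Q. \<not> endgame_ok (P - {x}) (Q - {y})}"
  have "finite (P \<times> Q)"
    using finite_subset[OF P finite_B1] finite_subset[OF Q finite_B2] by simp
  have "card ?bad \<le> 2 * n"
    using card_bad_exchanges_le[OF P Q] card by simp
  moreover have "card ?fail \<le> 1"
    using card_endgame_failures_le_1[OF P Q] card \<open>3 \<le> n\<close> by simp
  ultimately have "card (?bad \<union> ?fail) \<le> 2 * n + 1"
    using card_Un_le[of ?bad ?fail] by linarith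
  also have "\<dots> < n * n"
    using mult_le_mono1[OF \<open>3 \<le> n\<close>, of n] \<open>3 \<le> n\<close> by linarith
  also have "\<dots> = card (P \<times> Q)"
    using card by (simp add: card_cartesian_product)
  finally have less: "card (?bad \<union> ?fail) < card (P \<times> Q)" .
  have "\<not> P \<times> Q \<subseteq> ?bad \<union> ?fail"
  proof
    have "?bad \<union> ?fail \<subseteq> P \<times> Q" by blast
    then have "finite (?bad \<union> ?fail)"
      using \<open>finite (P \<times> Q)\<close> by (rule finite_subset)
    moreover assume "P \<times> Q \<subseteq> ?bad \<union> ?fail"
    ultimately have "card (P \<times> Q) \<le> card (?bad \<union> ?fail)"
      by (rule card_mono)
    then show False using less by simp
  qed
  then show ?thesis by auto
qed

lemma good_split_B1: "good_split B1"
proof -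
  have "B1 \<union> B2 - B1 = B2" using disjoint by auto
  then show ?thesis unfolding good_split_def using good_B1 good_B2 by simp
qed

lemma exists_exchange_step:
  assumes P: "P \<subseteq> B1" and Q: "Q \<subseteq> B2" and card: "card P = Suc n" "card Q = Suc n"
    and ok: "endgame_ok P Q"
  shows "\<exists>x \<in> P. \<exists>y \<in> Q. good_split (exchanged (P - {x}) (Q - {y})) \<and> endgame_ok (P - {x}) (Q - {y})"
proof -
  consider "n = 0" | "n = 1" | "2 \<le> n" by linarith
  then show ?thesis
  proof cases
    case 1
    then obtain x y where "P = {x}" "Q = {y}"
      using card by (metis One_nat_def card_1_singletonE)
    then show ?thesis
      using good_split_B1 unfolding endgame_ok_def exchanged_def by simp
  next
    case 2
    then obtain p q where pq: "p \<in> P" "q \<in> Q" "good_split (exchanged {p} {q})"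
      using ok card unfolding endgame_ok_def by auto
    have "card (P - {p}) = 1" "card (Q - {q}) = 1"
      using pq(1,2) card 2 by simp_all
    then obtain x y where "P - {p} = {x}" "Q - {q} = {y}"
      by (metis card_1_singletonE)
    then have "x \<in> P" "y \<in> Q" "P - {x} = {p}" "Q - {y} = {q}"
      using pq(1,2) by auto
    moreover have "good_split (exchanged (P - {x}) (Q - {y}))" "endgame_ok (P - {x}) (Q - {y})"
      using pq(3) \<open>P - {x} = {p}\<close> \<open>Q - {y} = {q}\<close> unfolding endgame_ok_def by simp_all
    ultimately show ?thesis by blast
  next
    case 3
    then show ?thesis
      using exists_exchange_step_counting[OF P Q card] by simp
  qed
qed

lemma exists_exchange_orderings:
  assumes "P \<subseteq> B1" "Q \<subseteq> B2" "card P = n" "card Q = n"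
    and "good_split (exchanged P Q)" "endgame_ok P Q"
  shows "\<exists>xs ys. distinct xs \<and> set xs = P \<and> distinct ys \<and> set ys = Q \<and>
           (\<forall>k \<le> n. good_split (exchanged (set (take k xs)) (set (take k ys))))"
  using assms
proof (induction n arbitrary: P Q)
  case 0
  have "finite P" "finite Q"
    using finite_subset[OF "0.prems"(1) finite_B1] finite_subset[OF "0.prems"(2) finite_B2] .
  then have "P = {}" "Q = {}"
    using 0 by simp_all
  then show ?case
    using 0 by (intro exI[of _ "[]"]) auto
next
  case (Suc n)
  obtain x y where x: "x \<in> P" and y: "y \<in> Q"
    and split: "good_split (exchanged (P - {x}) (Q - {y}))" and ok: "endgame_ok (P - {x}) (Q - {y})"
    using exists_exchange_step[OF Suc.prems(1-4,6)] by blast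
  have "finite P" "finite Q"
    using finite_subset[OF Suc.prems(1) finite_B1] finite_subset[OF Suc.prems(2) finite_B2] .
  have sub: "P - {x} \<subseteq> B1" "Q - {y} \<subseteq> B2" "card (P - {x}) = n" "card (Q - {y}) = n"
    using Suc.prems x y \<open>finite P\<close> \<open>finite Q\<close> by auto
  then obtain xs ys where xs: "distinct xs" "set xs = P - {x}" and ys: "distinct ys" "set ys = Q - {y}"
    and splits: "\<forall>k \<le> n. good_split (exchanged (set (take k xs)) (set (take k ys)))"
    using Suc.IH[OF sub split ok] by blast
  have "length xs = n" "length ys = n"
    using distinct_card[OF xs(1)] distinct_card[OF ys(1)] xs(2) ys(2) Suc.prems(3,4) x y \<open>finite P\<close> \<open>finite Q\<close>
    by simp_all
  have "good_split (exchanged (set (take k (xs @ [x]))) (set (take k (ys @ [y]))))"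
    if "k \<le> Suc n" for k
  proof (cases "k = Suc n")
    case True
    then have "set (take k (xs @ [x])) = P" "set (take k (ys @ [y])) = Q"
      using \<open>length xs = n\<close> \<open>length ys = n\<close> xs(2) ys(2) x y by auto
    then show ?thesis using Suc.prems(5) by simp
  next
    case False
    then show ?thesis
      using splits that \<open>length xs = n\<close> \<open>length ys = n\<close> by simp
  qed
  moreover have "distinct (xs @ [x])" "set (xs @ [x]) = P" "distinct (ys @ [y])" "set (ys @ [y]) = Q"
    using xs ys x y by auto
  ultimately show ?case by blast
qed

lemma endgame_ok_blocks: "endgame_ok B1 B2"
  unfolding endgame_ok_def
proof
  assume "card B1 = 2"
  then obtain a a' c c' where "B1 = {a, a'}" "a \<noteq> a'" "B2 = {c, c'}" "c \<noteq> c'"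
    using card_B1 card_B2 by (metis card_2_iff)
  then have a: "a \<in> B1" "B1 - {a} = {a'}" and c: "c \<in> B2" "c' \<in> B2" "c \<noteq> c'"
    and c_compl: "B2 - {c} = {c'}" "B2 - {c'} = {c}"
    by auto
  then have a': "a' \<in> B1" by blast
  let ?U = "B1 \<union> B2" and ?S = "exchanged {a} {c}" and ?T = "exchanged {a} {c'}"
  have sub: "?S \<subseteq> ?U" "?T \<subseteq> ?U" "?U - ?S \<subseteq> ?U" "?U - ?T \<subseteq> ?U"
    using c exchanged_subset[of "{c}"] exchanged_subset[of "{c'}"] by auto
  have card: "card ?S = r" "card ?T = r"
    using a c card_exchanged[of "{a}" "{c}"] card_exchanged[of "{a}" "{c'}"] by auto
  have compl: "?U - ?S = exchanged {a'} {c'}" "?U - ?T = exchanged {a'} {c}"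
    using a c c_compl complement_exchanged[of "{a}" "{c}"] complement_exchanged[of "{a}" "{c'}"] by auto
  have "adjacent ?S ?T"
    using c by (intro exchanged_adjacent_right adjacent_singletons) auto
  moreover have "adjacent ?S (?U - ?T)"
    unfolding compl using a a' c by (intro exchanged_adjacent_left adjacent_singletons) auto
  moreover have "adjacent ?T (?U - ?S)"
    unfolding compl using a a' c by (intro exchanged_adjacent_left adjacent_singletons) auto
  ultimately have "good ?S \<or> good ?T" "good (?U - ?S) \<or> good (?U - ?T)"
    "good ?S \<or> good (?U - ?T)" "good ?T \<or> good (?U - ?S)"
    using good_split_adjacent[OF sub(1,2) card(1)] good_adjacent[OF sub(1,4) card(1)]
      good_adjacent[OF sub(2,3) card(2)] by blast+
  then have "good_split ?S \<or> good_split ?T"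
    unfolding good_split_def by blast
  then show "\<exists>p \<in> B1. \<exists>q \<in> B2. good_split (exchanged {p} {q})"
    using a c by blast
qed

lemma exists_cyclic_list:
  "\<exists>zs. distinct zs \<and> length zs = 2 * r \<and> set (take r zs) = B1 \<and> set (drop r zs) = B2 \<and>
     (\<forall>i < 2 * r. good (set (take r (rotate i zs))))"
proof -
  have "exchanged B1 B2 = B2" "B1 \<union> B2 - B2 = B1"
    unfolding exchanged_def using disjoint by auto
  then have "good_split (exchanged B1 B2)"
    unfolding good_split_def using good_B1 good_B2 by simp
  then obtain xs ys where xs: "distinct xs" "set xs = B1" and ys: "distinct ys" "set ys = B2"
    and splits: "\<And>k. k \<le> r \<Longrightarrow> good_split (exchanged (set (take k xs)) (set (take k ys)))"
    using exists_exchange_orderings[OF order_refl order_refl card_B1 card_B2 _ endgame_ok_blocks] by blast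
  have len: "length xs = r" "length ys = r"
    using distinct_card[OF xs(1)] distinct_card[OF ys(1)] xs(2) ys(2) card_B1 card_B2 by simp_all
  have "good (set (take r (rotate i (xs @ ys))))" if "i < 2 * r" for i
  proof (cases "i < r")
    case True
    have "set (take r (rotate i (xs @ ys))) = set (drop i xs) \<union> set (take i ys)"
      using set_take_rotate_append[OF len] True by simp
    also have "\<dots> = exchanged (set (take i xs)) (set (take i ys))"
      unfolding exchanged_def using set_drop_eq_Diff_set_take[OF xs(1)] xs(2) by simp
    finally show ?thesis
      using splits[of i] True unfolding good_split_def by simp
  next
    case False
    define k where "k = i - r"
    have k: "k < r" "i = k + r"
      using that False unfolding k_def by auto
    have "rotate i (xs @ ys) = rotate k (ys @ xs)"
      using rotate_rotate[of k r "xs @ ys"] rotate_append[of xs ys] k(2) len(1) by simp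
    then have "set (take r (rotate i (xs @ ys))) = set (drop k ys) \<union> set (take k xs)"
      using set_take_rotate_append[OF len(2,1)] k(1) by simp
    also have "\<dots> = B1 \<union> B2 - exchanged (set (take k xs)) (set (take k ys))"
      using complement_exchanged[of "set (take k xs)" "set (take k ys)"]
        set_drop_eq_Diff_set_take[OF ys(1)] xs(2) ys(2) set_take_subset[of k xs] set_take_subset[of k ys]
      unfolding exchanged_def by auto
    finally show ?thesis
      using splits[of k] k(1) unfolding good_split_def by simp
  qed
  moreover have "distinct (xs @ ys)"
    using xs ys disjoint by simp
  moreover have "take r (xs @ ys) = xs" "drop r (xs @ ys) = ys"
    using len by simp_all
  ultimately show ?thesis
    using xs(2) ys(2) len by (intro exI[of _ "xs @ ys"]) auto
qed

end

lemma sparse_exchange_disjoint_bases: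
  assumes sp: "sparse_paving E indep" and rank: "matroid_rank E indep = r"
    and "basis E indep B1" "basis E indep B2" "B1 \<inter> B2 = {}"
  shows "sparse_exchange B1 B2 r (basis E indep)"
proof -
  have M: "matroid E indep"
    using sp by (rule sparse_paving_matroid)
  have B: "indep B1" "card B1 = r" "indep B2" "card B2 = r"
    using assms(2-4) basis_iff_indep_card[OF M] by auto
  have U: "B1 \<union> B2 \<subseteq> E"
    using B indep_subset_ground[OF M] by blast
  show ?thesis
  proof
    show "finite B1" "finite B2"
      using B indep_finite[OF M] by auto
    fix S T assume ST: "S \<subseteq> B1 \<union> B2" "T \<subseteq> B1 \<union> B2" and "card S = r" "adjacent S T"
    moreover have "S \<subseteq> E" "T \<subseteq> E"
      using ST U by auto
    ultimately show "basis E indep S \<or> basis E indep T"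
      using sparse_paving_adjacent_basis[OF sp] rank by simp
  qed (use B assms(3-5) in auto)
qed

theorem theorem2p9:
  fixes E :: "'a set" and indep :: "'a set \<Rightarrow> bool" and r :: nat and B1 B2 :: "'a set"
  assumes "sparse_paving E indep"
    and "matroid_rank E indep = r"
    and "basis E indep B1" and "basis E indep B2"
    and "B1 \<inter> B2 = {}"
  shows "\<exists>b :: nat \<Rightarrow> 'a.
           bij_betw b {0..<2*r} (B1 \<union> B2) \<and>
           b ` {0..<r} = B1 \<and> b ` {r..<2*r} = B2 \<and>
           (\<forall>i < 2*r. basis E indep {b ((i + j) mod (2*r)) | j. j < r})"
proof -
  interpret sparse_exchange B1 B2 r "basis E indep"
    using sparse_exchange_disjoint_bases[OF assms] .
  obtain zs where zs: "distinct zs" "length zs = 2 * r" "set (take r zs) = B1" "set (drop r zs) = B2"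
    and windows: "\<forall>i < 2 * r. basis E indep (set (take r (rotate i zs)))"
    using exists_cyclic_list by blast
  have "set zs = B1 \<union> B2"
    using zs(3,4) by (metis append_take_drop_id set_append)
  then have "bij_betw ((!) zs) {0..<2 * r} (B1 \<union> B2)"
    using zs(1,2) by (intro bij_betw_nth) auto
  moreover have "(!) zs ` {0..<r} = B1" "(!) zs ` {r..<2 * r} = B2"
    using zs(2-4) nth_image[of r zs] nth_image_atLeastLessThan_length[of zs r] by simp_all
  moreover have "{zs ! ((i + j) mod (2 * r)) | j. j < r} = set (take r (rotate i zs))" for i
    using set_take_rotate_conv_nth[of r zs i] zs(2) by simp
  ultimately show ?thesis
    using windows by (intro exI[of _ "(!) zs"]) auto
qed

end
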